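(* Let $k$ be a field and $A$ a $k$-algebra with $\dim_k A\geq 4$. Then exactly one of the following holds: (i) there exist $x,y\in A$ such that $\dim_k(k1+kx+ky+kxy)\geq 4$; (ii) there exists a $k$-subspace $V$ of $A$ with $A=k1\oplus V$ and $V\cdot V=0$; (iii) there exists a $k$-subspace $V$ of $A$ and elements $e,f\in A$ with $A=ke\oplus kf\oplus V$, $V\cdot V=eV=Vf=0$, $e^2=e$, $f^2=f$, $ef=fe=0$, $e+f=1$; equivalently $A\simeq \begin{bmatrix} k & V\\ 0 & k\end{bmatrix}$.
   Context: Here a $k$-algebra means an associative unital $k$-algebra, not necessarily commutative (case (iii) is non-commutative). For subsets $X,Y\subseteq A$, $X\cdot Y$ denotes the set (span) of products $xy$ with $x\in X$, $y\in Y$. *)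

theory Defs
  imports Complex_Main
begin

text \<open>An associative unital algebra over a field: the ring structure is that of the
  type class ring_1 on 'b, and scale is a k-vector space structure on 'b compatible
  with multiplication (k-bilinearity of the product).\<close>
locale k_algebra = vector_space scale
  for scale :: "'a::field \<Rightarrow> 'b::ring_1 \<Rightarrow> 'b" +
  assumes scale_mult_left: "scale c (x * y) = scale c x * y"
      and scale_mult_right: "scale c (x * y) = x * scale c y"

definition fin_dim :: "('a::field \<Rightarrow> 'b::ring_1 \<Rightarrow> 'b) \<Rightarrow> bool" where
  "fin_dim scale \<longleftrightarrow> (\<exists>B. finite B \<and> module.span scale B = UNIV)"

text \<open>dim_k A \<ge> n, allowing infinite dimension (the library's dim is 0 in that case).\<close>
definition dim_ge :: "('a::field \<Rightarrow> 'b::ring_1 \<Rightarrow> 'b) \<Rightarrow> nat \<Rightarrow> bool" where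
  "dim_ge scale n \<longleftrightarrow> \<not> fin_dim scale \<or> vector_space.dim scale (UNIV :: 'b set) \<ge> n"

definition line :: "('a::field \<Rightarrow> 'b::ring_1 \<Rightarrow> 'b) \<Rightarrow> 'b \<Rightarrow> 'b set" where
  "line scale x = range (\<lambda>c. scale c x)"

definition direct_sum2 :: "'b::ring_1 set \<Rightarrow> 'b set \<Rightarrow> bool" where
  "direct_sum2 U W \<longleftrightarrow> (\<forall>a. \<exists>!p. fst p \<in> U \<and> snd p \<in> W \<and> a = fst p + snd p)"

definition direct_sum3 :: "'b::ring_1 set \<Rightarrow> 'b set \<Rightarrow> 'b set \<Rightarrow> bool" where
  "direct_sum3 U W V \<longleftrightarrow>
     (\<forall>a. \<exists>!t. fst t \<in> U \<and> fst (snd t) \<in> W \<and> snd (snd t) \<in> V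
              \<and> a = fst t + fst (snd t) + snd (snd t))"

end

theory Submission
  imports Defs
begin

text \<open>Say that \<open>A\<close> has products in span if \<open>x y \<in> span {1, x, y}\<close> for all \<open>x, y\<close>. For
  \<open>dim A \<ge> 4\<close> this is exactly the failure of (i): that failure gives \<open>x y \<in> span {1, x, y}\<close>
  whenever \<open>1, x, y\<close> are independent, so \<open>x\<^sup>2 = x (x + y) - x y\<close> lies in \<open>span {1, x, y}\<close>
  and in \<open>span {1, x, z}\<close> for suitable \<open>y, z\<close>, hence in \<open>span {1, x}\<close>, and the dependent
  cases follow. Both (ii) and (iii) have products in span, and (ii) has only the idempotents
  0 and 1 while (iii) has a third one, so at most one alternative holds.

  Conversely, with products in span every \<open>x\<close> satisfies a split quadratic
  \<open>(x - \<mu>) (x - \<gamma>) = 0\<close>. If \<open>\<mu> \<noteq> \<gamma>\<close>, a multiple of \<open>x - \<mu>\<close> is idempotent. So if all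
  idempotents are scalars, every element is a scalar plus an element of square zero, and
  these form a complement \<open>V\<close> of \<open>k 1\<close> with \<open>V V = 0\<close>: this is (ii). Otherwise take an
  idempotent \<open>e \<notin> k 1\<close> and \<open>f = 1 - e\<close>. Products in span force \<open>e A \<subseteq> k e\<close> or
  \<open>f A \<subseteq> k f\<close>, and \<open>A e \<subseteq> k e\<close> or \<open>A f \<subseteq> k f\<close>. The two mixed cases give the Peirce
  decomposition \<open>A = k e \<oplus> k f \<oplus> f A e\<close> of (iii). In the two pure cases \<open>A = k e \<oplus> f A f\<close>,
  say, so the corner \<open>f A f\<close> has dimension at least 3; but in a corner \<open>g A g\<close> with
  \<open>g \<noteq> 1\<close>, products in span give \<open>b c = \<alpha> (g - b - c)\<close> for independent \<open>g, b, c\<close>, and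
  comparing this with the same formula for \<open>b + g\<close> in place of \<open>b\<close> yields \<open>1 = 0\<close>.\<close>

section \<open>Linear algebra\<close>

context vector_space
begin

lemma in_span_pair_iff: "x \<in> span {a, b} \<longleftrightarrow> (\<exists>p q. x = p *s a + q *s b)"
  by (auto simp: span_breakdown_eq span_singleton image_iff algebra_simps)

lemma in_span_triple_iff: "x \<in> span {a, b, c} \<longleftrightarrow> (\<exists>p q r. x = p *s a + q *s b + r *s c)"
  by (auto simp: span_breakdown_eq span_singleton image_iff algebra_simps)

lemma span_unscale: "c *s x \<in> span S \<Longrightarrow> c \<noteq> 0 \<Longrightarrow> x \<in> span S"
  using span_scale[of "c *s x" S "inverse c"] by simp

lemma lin_comb3_unique:
  assumes a: "a \<noteq> 0" and b: "b \<notin> span {a}" and c: "c \<notin> span {a, b}"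
    and eq: "p *s a + q *s b + r *s c = p' *s a + q' *s b + r' *s c"
  shows "p = p' \<and> q = q' \<and> r = r'"
proof -
  have "(r - r') *s c = (p' - p) *s a + (q' - q) *s b"
    using eq by (simp add: algebra_simps)
  hence r: "r = r'"
    using c span_unscale in_span_pair_iff by (metis right_minus_eq)
  have "(q - q') *s b = (p' - p) *s a"
    using eq by (simp add: r algebra_simps)
  hence q: "q = q'"
    using b span_unscale span_singleton by (metis rangeI right_minus_eq)
  show ?thesis using eq a r q by simp
qed

lemma dim_eq_4_if_not_in_spans:
  assumes "a \<noteq> 0" "b \<notin> span {a}" "c \<notin> span {a, b}" "d \<notin> span {a, b, c}"
  shows "dim {a, b, c, d} = 4"
proof -
  have distinct: "b \<noteq> a" "c \<notin> {a, b}" "d \<notin> {a, b, c}"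
    using assms(2-4) by (auto intro: span_base)
  have "independent {a}"
    by (rule independent_insertI) (use assms(1) independent_empty in auto)
  hence "independent {b, a}"
    by (rule independent_insertI[rotated]) (use assms(2) in auto)
  hence "independent {c, b, a}"
    by (rule independent_insertI[rotated]) (use assms(3) in \<open>simp add: insert_commute\<close>)
  hence "independent {d, c, b, a}"
    by (rule independent_insertI[rotated]) (use assms(4) in \<open>simp add: insert_commute\<close>)
  hence "independent {a, b, c, d}"
    by (simp add: insert_commute)
  moreover have "card {a, b, c, d} = 4"
    using distinct by auto
  ultimately show ?thesis by (simp add: dim_eq_card_independent)
qed

lemma span_insert_Int_span_insert:
  assumes z: "z \<notin> span (insert y S)"
  shows "span (insert y S) \<inter> span (insert z S) = span S"
proof
  show "span S \<subseteq> span (insert y S) \<inter> span (insert z S)"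
    by (simp add: span_mono subset_insertI)
next
  show "span (insert y S) \<inter> span (insert z S) \<subseteq> span S"
  proof
    fix w assume w: "w \<in> span (insert y S) \<inter> span (insert z S)"
    then obtain t where t: "w - t *s z \<in> span S"
      using span_breakdown_eq by blast
    have "t = 0"
    proof (rule ccontr)
      assume "t \<noteq> 0"
      have "w - t *s z \<in> span (insert y S)"
        using t span_mono[of S "insert y S"] by blast
      hence "t *s z \<in> span (insert y S)"
        using w span_diff[of w "insert y S" "w - t *s z"] by simp
      thus False using z span_unscale \<open>t \<noteq> 0\<close> by blast
    qed
    thus "w \<in> span S" using t by simp
  qed
qed

lemma subspace_Un_eq_UNIV:
  assumes U: "subspace U" and W: "subspace W" and UW: "U \<union> W = UNIV"
  shows "U = UNIV \<or> W = UNIV"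
proof (rule ccontr)
  assume "\<not> ?thesis"
  then obtain u w where "u \<notin> U" "w \<notin> W" by blast
  with UW have "u \<in> W" "w \<in> U" by auto
  have "u + w \<in> U \<or> u + w \<in> W" using UW by auto
  thus False
    using subspace_diff[OF U, of "u + w" w] subspace_diff[OF W, of "u + w" u]
      \<open>u \<notin> U\<close> \<open>w \<notin> W\<close> \<open>u \<in> W\<close> \<open>w \<in> U\<close> by auto
qed

end

lemma direct_sum2D: "direct_sum2 U W \<Longrightarrow> \<exists>u\<in>U. \<exists>w\<in>W. a = u + w"
  unfolding direct_sum2_def by blast

lemma direct_sum3D: "direct_sum3 U W V \<Longrightarrow> \<exists>u\<in>U. \<exists>w\<in>W. \<exists>v\<in>V. a = u + w + v"
  unfolding direct_sum3_def by blast

section \<open>Algebras with products in span\<close>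

context k_algebra
begin

notation scale (infixr \<open>*s\<close> 75)

lemma mult_scale_left [simp]: "(c *s x) * y = c *s (x * y)"
  by (simp add: scale_mult_left)

lemma mult_scale_right [simp]: "x * (c *s y) = c *s (x * y)"
  by (simp add: scale_mult_right)

lemma line_eq_span: "line scale x = span {x}"
  by (simp add: line_def span_singleton)

lemma direct_sum2I:
  assumes U: "subspace U" and W: "subspace W" and UW: "U \<inter> W \<subseteq> {0}"
    and sum: "\<And>a. \<exists>u\<in>U. \<exists>w\<in>W. a = u + w"
  shows "direct_sum2 U W"
  unfolding direct_sum2_def
proof
  fix a
  obtain u w where uw: "u \<in> U" "w \<in> W" "a = u + w" using sum by blast
  show "\<exists>!p. fst p \<in> U \<and> snd p \<in> W \<and> a = fst p + snd p"
  proof (rule ex1I[of _ "(u, w)"])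
    fix p assume p: "fst p \<in> U \<and> snd p \<in> W \<and> a = fst p + snd p"
    have "fst p - u = w - snd p" using p uw by (simp add: algebra_simps)
    moreover have "fst p - u \<in> U" "w - snd p \<in> W"
      using p uw U W by (auto intro: subspace_diff)
    ultimately show "p = (u, w)" using UW by (auto simp: prod_eq_iff)
  qed (use uw in simp)
qed

lemma direct_sum3I:
  assumes U: "subspace U" and W: "subspace W" and V: "subspace V"
    and indep: "\<And>u w v. u \<in> U \<Longrightarrow> w \<in> W \<Longrightarrow> v \<in> V \<Longrightarrow> u + w + v = 0
      \<Longrightarrow> u = 0 \<and> w = 0"
    and sum: "\<And>a. \<exists>u\<in>U. \<exists>w\<in>W. \<exists>v\<in>V. a = u + w + v"
  shows "direct_sum3 U W V"
  unfolding direct_sum3_def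
proof
  fix a
  obtain u w v where uwv: "u \<in> U" "w \<in> W" "v \<in> V" "a = u + w + v" using sum by blast
  show "\<exists>!t. fst t \<in> U \<and> fst (snd t) \<in> W \<and> snd (snd t) \<in> V \<and> a = fst t + fst (snd t) + snd (snd t)"
  proof (rule ex1I[of _ "(u, w, v)"])
    fix t assume t: "fst t \<in> U \<and> fst (snd t) \<in> W \<and> snd (snd t) \<in> V \<and> a = fst t + fst (snd t) + snd (snd t)"
    have "(fst t - u) + (fst (snd t) - w) + (snd (snd t) - v) = 0"
      using t uwv by (simp add: algebra_simps)
    moreover have "fst t - u \<in> U" "fst (snd t) - w \<in> W" "snd (snd t) - v \<in> V"
      using t uwv U W V by (auto intro: subspace_diff)
    ultimately have "fst t - u = 0 \<and> fst (snd t) - w = 0"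
      by (intro indep)
    with t uwv show "t = (u, w, v)" by (simp add: prod_eq_iff)
  qed (use uwv in simp)
qed

lemma exists_not_in_span_triple:
  assumes "dim_ge scale 4"
  obtains z where "z \<notin> span {a, b, c}"
proof -
  have "span {a, b, c} \<noteq> UNIV"
  proof
    assume span: "span {a, b, c} = UNIV"
    hence "fin_dim scale" unfolding fin_dim_def by (intro exI[of _ "{a, b, c}"]) simp
    have "dim (UNIV :: 'b set) \<le> card {a, b, c}" by (rule dim_le_card) (use span in auto)
    also have "\<dots> \<le> 3" by (auto simp: card_insert_if)
    finally show False using assms \<open>fin_dim scale\<close> unfolding dim_ge_def by simp
  qed
  thus thesis using that by blast
qed

definition products_in_span :: bool where
  "products_in_span \<longleftrightarrow> (\<forall>x y. x * y \<in> span {1, x, y})"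

definition square_zero_form :: bool where
  "square_zero_form \<longleftrightarrow>
     (\<exists>V. subspace V \<and> direct_sum2 (line scale 1) V \<and> (\<forall>v\<in>V. \<forall>w\<in>V. v * w = 0))"

definition triangular_form :: bool where
  "triangular_form \<longleftrightarrow> (\<exists>V e f. subspace V \<and> direct_sum3 (line scale e) (line scale f) V
     \<and> (\<forall>v\<in>V. \<forall>w\<in>V. v * w = 0) \<and> (\<forall>v\<in>V. e * v = 0) \<and> (\<forall>v\<in>V. v * f = 0)
     \<and> e * e = e \<and> f * f = f \<and> e * f = 0 \<and> f * e = 0 \<and> e + f = 1)"

lemma products_in_spanD: "products_in_span \<Longrightarrow> \<exists>p q r. x * y = p *s 1 + q *s x + r *s y"
  unfolding products_in_span_def in_span_triple_iff by blast

lemma scale_in_span_singleton [simp]: "c *s x \<in> span {x}"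
  by (simp add: span_base span_scale)

lemma dim_le_3_if_products_in_span:
  assumes "products_in_span"
  shows "dim {1, x, y, x * y} \<le> 3"
proof -
  have "{1, x, y, x * y} \<subseteq> span {1, x, y}"
    using assms unfolding products_in_span_def by (auto intro: span_base)
  hence "dim {1, x, y, x * y} \<le> card {1, x, y}" by (rule dim_le_card) simp
  also have "\<dots> \<le> 3" by (auto simp: card_insert_if)
  finally show ?thesis .
qed

lemma product_in_span_if_dim_lt_4:
  assumes "\<And>x y. dim {1, x, y, x * y} < 4" and "x \<notin> span {1}" and "y \<notin> span {1, x}"
  shows "x * y \<in> span {1, x, y}"
proof (rule ccontr)
  assume "x * y \<notin> span {1, x, y}"
  with assms(2,3) have "dim {1, x, y, x * y} = 4"
    by (intro dim_eq_4_if_not_in_spans) simp_all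
  with assms(1)[of x y] show False by simp
qed

lemma square_in_span_if_indep_products_in_span:
  assumes dim: "dim_ge scale 4"
    and indep: "\<And>x y. x \<notin> span {1} \<Longrightarrow> y \<notin> span {1, x} \<Longrightarrow> x * y \<in> span {1, x, y}"
  shows "x * x \<in> span {1, x}"
proof (cases "x \<in> span {1}")
  case True
  then obtain p where "x = p *s 1" by (auto simp: span_singleton)
  hence "x * x = p *s x" by simp
  thus ?thesis by (simp add: span_base span_scale)
next
  case x: False
  have square: "x * x \<in> span (insert y {1, x})" if y: "y \<notin> span {1, x}" for y
  proof -
    have "x \<in> span {1, x}" by (simp add: span_base)
    hence "x + y \<notin> span {1, x}" using y span_add_eq by blast
    hence "x * (x + y) \<in> span {1, x, x + y}" using indep x by blast
    moreover have "span {1, x, x + y} \<subseteq> span (insert y {1, x})"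
      by (rule span_minimal) (auto intro: span_base span_add)
    moreover have "x * y \<in> span (insert y {1, x})"
      using indep[OF x y] by (simp add: insert_commute)
    ultimately have "x * (x + y) - x * y \<in> span (insert y {1, x})"
      by (blast intro: span_diff)
    thus ?thesis by (simp add: distrib_left)
  qed
  obtain y where y: "y \<notin> span {1, x, x}" using exists_not_in_span_triple[OF dim] .
  obtain z where z: "z \<notin> span {1, x, y}" using exists_not_in_span_triple[OF dim] .
  have "z \<notin> span {1, x}" using z span_mono[of "{1, x}" "{1, x, y}"] by blast
  hence "x * x \<in> span (insert y {1, x}) \<inter> span (insert z {1, x})"
    using square y by simp
  also have "\<dots> = span {1, x}"
    by (rule span_insert_Int_span_insert) (use z in \<open>simp add: insert_commute\<close>)
  finally show ?thesis .
qed

lemma products_in_span_if_indep_products_in_span: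
  assumes dim: "dim_ge scale 4"
    and indep: "\<And>x y. x \<notin> span {1} \<Longrightarrow> y \<notin> span {1, x} \<Longrightarrow> x * y \<in> span {1, x, y}"
  shows "products_in_span"
  unfolding products_in_span_def
proof (intro allI)
  fix x y
  consider "x \<in> span {1}" | "y \<in> span {1, x}" | "x \<notin> span {1}" "y \<notin> span {1, x}" by blast
  then show "x * y \<in> span {1, x, y}"
  proof cases
    case 1
    then obtain p where "x = p *s 1" by (auto simp: span_singleton)
    hence "x * y = p *s y" by simp
    thus ?thesis by (simp add: span_base span_scale)
  next
    case 2
    then obtain p q where y: "y = p *s 1 + q *s x" by (auto simp: in_span_pair_iff)
    have "x * y = p *s x + q *s (x * x)" by (simp add: y distrib_left)
    moreover have "x * x \<in> span {1, x}"
      by (rule square_in_span_if_indep_products_in_span[OF dim indep])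
    ultimately have "x * y \<in> span {1, x}" by (simp add: span_add span_scale span_base)
    thus ?thesis using span_mono[of "{1, x}" "{1, x, y}"] by blast
  next
    case 3
    thus ?thesis by (rule indep)
  qed
qed

lemma products_in_span_iff_dim_lt_4:
  assumes "dim_ge scale 4"
  shows "products_in_span \<longleftrightarrow> (\<forall>x y. dim {1, x, y, x * y} < 4)"
proof
  assume prod: "products_in_span"
  show "\<forall>x y. dim {1, x, y, x * y} < 4"
  proof (intro allI)
    fix x y
    show "dim {1, x, y, x * y} < 4"
      using dim_le_3_if_products_in_span[OF prod, of x y] by linarith
  qed
next
  assume "\<forall>x y. dim {1, x, y, x * y} < 4"
  thus "products_in_span"
    by (intro products_in_span_if_indep_products_in_span[OF assms] product_in_span_if_dim_lt_4)
      auto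
qed

lemma products_in_span_if_square_zero_form:
  assumes "square_zero_form"
  shows "products_in_span"
proof -
  obtain V where ds: "direct_sum2 (line scale 1) V" and VV: "\<forall>v\<in>V. \<forall>w\<in>V. v * w = 0"
    using assms unfolding square_zero_form_def by blast
  have decomp: "\<exists>a v. x = a *s 1 + v \<and> v \<in> V" for x
    using direct_sum2D[OF ds, of x] by (auto simp: line_def)
  have "x * y \<in> span {1, x, y}" for x y
  proof -
    obtain a v where x: "x = a *s 1 + v" and v: "v \<in> V" using decomp by blast
    obtain b w where y: "y = b *s 1 + w" and w: "w \<in> V" using decomp by blast
    have "v * w = 0" using VV v w by blast
    hence "x * y = (- (a * b)) *s 1 + b *s x + a *s y"
      by (simp add: x y algebra_simps)
    thus ?thesis unfolding in_span_triple_iff by blast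
  qed
  thus ?thesis unfolding products_in_span_def by blast
qed

lemma products_in_span_if_triangular_form:
  assumes "triangular_form"
  shows "products_in_span"
proof -
  obtain V e f where ds: "direct_sum3 (line scale e) (line scale f) V"
    and VV: "\<forall>v\<in>V. \<forall>w\<in>V. v * w = 0" and eV: "\<forall>v\<in>V. e * v = 0" and Vf: "\<forall>v\<in>V. v * f = 0"
    and ee: "e * e = e" and ff: "f * f = f" and ef: "e * f = 0" and fe: "f * e = 0"
    and ef1: "e + f = 1"
    using assms unfolding triangular_form_def by blast
  have decomp: "\<exists>a b v. x = a *s e + b *s f + v \<and> v \<in> V" for x
    using direct_sum3D[OF ds, of x] by (auto simp: line_def)
  have right_unit: "u * e = u" if "u * f = 0" for u
    using that distrib_left[of u e f] by (simp add: ef1)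
  have left_unit: "f * u = u" if "e * u = 0" for u
    using that distrib_right[of e f u] by (simp add: ef1)
  have "x * y \<in> span {1, x, y}" for x y
  proof -
    obtain a b v where x: "x = a *s e + b *s f + v" and v: "v \<in> V" using decomp by blast
    obtain c d w where y: "y = c *s e + d *s f + w" and w: "w \<in> V" using decomp by blast
    have "e * v = 0" "e * w = 0" "v * f = 0" "w * f = 0" "v * w = 0"
      using v w eV Vf VV by auto
    moreover have "v * e = v" "w * e = w" "f * v = v" "f * w = w"
      using calculation right_unit left_unit by auto
    ultimately have "x * y = (- (b * c)) *s (e + f) + c *s x + b *s y"
      by (simp add: x y algebra_simps ee ff ef fe)
    thus ?thesis unfolding ef1 in_span_triple_iff by blast
  qed
  thus ?thesis unfolding products_in_span_def by blast
qed

lemma idempotent_in_span_one: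
  assumes "e \<in> span {1}" and "e * e = e"
  shows "e = 0 \<or> e = 1"
proof -
  obtain c where e: "e = c *s 1" using assms(1) by (auto simp: span_singleton)
  with assms(2) have "c = c * c" by simp
  hence "c = 0 \<or> c = 1" by (simp add: mult_cancel_left1)
  thus ?thesis using e by auto
qed

lemma square_zero_form_idempotent:
  fixes e :: 'b
  assumes "square_zero_form" and ee: "e * e = e"
  shows "e = 0 \<or> e = 1"
proof -
  obtain V where ds: "direct_sum2 (line scale 1) V" and VV: "\<forall>v\<in>V. \<forall>w\<in>V. v * w = 0"
    using assms(1) unfolding square_zero_form_def by blast
  obtain c n where e: "e = c *s 1 + n" and n: "n \<in> V"
    using direct_sum2D[OF ds, of e] by (auto simp: line_def)
  have "(e - c *s 1) * (e - c *s 1) = 0" using VV n by (simp add: e)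
  hence "e - c *s e - c *s e + (c * c) *s 1 = 0"
    by (simp add: algebra_simps ee)
  hence "(1 - c - c) *s e + (c * c) *s 1 = 0"
    by (simp only: scale_left_diff_distrib scale_one)
  hence rel: "(1 - c - c) *s e = (- (c * c)) *s 1"
    by (simp only: eq_neg_iff_add_eq_0 scale_minus_left)
  have "1 - c - c \<noteq> 0"
  proof
    assume "1 - c - c = 0"
    with rel have "c = 0" by simp
    with \<open>1 - c - c = 0\<close> show False by simp
  qed
  moreover have "(1 - c - c) *s e \<in> span {1}" unfolding rel by (rule scale_in_span_singleton)
  ultimately have "e \<in> span {1}" by (blast intro: span_unscale)
  thus ?thesis using ee by (rule idempotent_in_span_one)
qed

lemma triangular_form_nontrivial_idempotent:
  assumes dim: "dim_ge scale 4" and "triangular_form"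
  shows "\<exists>e :: 'b. e * e = e \<and> e \<noteq> 0 \<and> e \<noteq> 1"
proof -
  obtain V e f where ds: "direct_sum3 (line scale e) (line scale f) V"
    and eV: "\<forall>v\<in>V. e * v = 0" and Vf: "\<forall>v\<in>V. v * f = 0"
    and ee: "e * e = e" and ef1: "e + f = 1"
    using assms(2) unfolding triangular_form_def by blast
  have "x \<in> span {1}" if e01: "e = 0 \<or> e = 1" for x
  proof -
    obtain a b v where x: "x = a *s e + b *s f + v" and v: "v \<in> V"
      using direct_sum3D[OF ds, of x] by (auto simp: line_def)
    from e01 show ?thesis
    proof
      assume "e = 0"
      with ef1 have "f = 1" by simp
      with Vf v have "v = 0" by auto
      with x \<open>e = 0\<close> \<open>f = 1\<close> show ?thesis by simp
    next
      assume "e = 1"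
      with ef1 have "f = 0" by simp
      with eV v \<open>e = 1\<close> have "v = 0" by auto
      with x \<open>e = 1\<close> \<open>f = 0\<close> show ?thesis by simp
    qed
  qed
  moreover obtain z where "z \<notin> span {1, 1, 1}" using exists_not_in_span_triple[OF dim] .
  ultimately have "e \<noteq> 0 \<and> e \<noteq> 1" by auto
  with ee show ?thesis by blast
qed

section \<open>Square-zero elements\<close>

lemma square_zero_mult:
  fixes n m :: 'b
  assumes prod: "products_in_span" and nn: "n * n = 0" and mm: "m * m = 0"
  shows "n * m = 0"
proof -
  obtain a b c where nm: "n * m = a *s 1 + b *s n + c *s m"
    using products_in_spanD[OF prod] by blast
  have "a *s n + c *s (n * m) = n * (n * m)"
    by (simp add: nm distrib_left mult.assoc[symmetric] nn)
  also have "\<dots> = 0" by (simp add: mult.assoc[symmetric] nn)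
  finally have left: "a *s n + c *s (n * m) = 0" .
  have "a *s m + b *s (n * m) = (n * m) * m"
    by (simp add: nm distrib_right mult.assoc mm)
  also have "\<dots> = 0" by (simp add: mult.assoc mm)
  finally have right: "a *s m + b *s (n * m) = 0" .
  have "a *s (n * m) = (a *s n + c *s (n * m)) * m"
    by (simp add: distrib_right mult.assoc mm)
  hence "a *s (n * m) = 0" by (simp add: left)
  thus ?thesis using nm left right
    by (cases "a = 0"; cases "b = 0"; cases "c = 0") auto
qed

text \<open>The element \<open>(x - \<mu>) (x - \<gamma>)\<close> below is a scalar; multiplying the relation
  expressing \<open>x y\<close> by it shows that it annihilates \<open>y \<notin> span {1, x}\<close>, so it vanishes.\<close>

lemma quadratic_splits:
  assumes prod: "products_in_span" and dim: "dim_ge scale 4"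
  shows "\<exists>\<mu> \<gamma>. (x - \<mu> *s 1) * (x - \<gamma> *s 1) = 0"
proof -
  obtain p q r where "x * x = p *s 1 + q *s x + r *s x"
    using products_in_spanD[OF prod] by blast
  hence xx: "x * x = p *s 1 + (q + r) *s x" by (simp add: scale_left_distrib)
  obtain y where y: "y \<notin> span {1, x, x}" using exists_not_in_span_triple[OF dim] .
  obtain \<alpha> \<beta> \<gamma> where xy: "x * y = \<alpha> *s 1 + \<beta> *s x + \<gamma> *s y"
    using products_in_spanD[OF prod] by blast
  define \<mu> where "\<mu> = q + r - \<gamma>"
  have split: "(x - \<mu> *s 1) * (x - \<gamma> *s 1) = (p + \<mu> * \<gamma>) *s 1"
    by (simp add: algebra_simps xx \<mu>_def)
  have "(p + \<mu> * \<gamma>) *s y = (x - \<mu> *s 1) * ((x - \<gamma> *s 1) * y)"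
    by (simp add: mult.assoc[symmetric] split)
  also have "(x - \<gamma> *s 1) * y = \<alpha> *s 1 + \<beta> *s x"
    using xy by (simp add: algebra_simps)
  also have "(x - \<mu> *s 1) * (\<alpha> *s 1 + \<beta> *s x)
      = (\<beta> * p - \<mu> * \<alpha>) *s 1 + (\<alpha> + \<beta> * (q + r) - \<mu> * \<beta>) *s x"
    by (simp add: algebra_simps xx)
  finally have "(p + \<mu> * \<gamma>) *s y \<in> span {1, x}"
    unfolding in_span_pair_iff by blast
  hence "p + \<mu> * \<gamma> = 0" using y span_unscale by auto
  with split show ?thesis by auto
qed

lemma square_zero_form_if_idempotents_scalar:
  assumes prod: "products_in_span" and dim: "dim_ge scale 4"
    and scalar: "\<And>e. e * e = e \<Longrightarrow> e \<in> span {1}"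
  shows "square_zero_form"
proof -
  define V :: "'b set" where "V = {n. n * n = 0}"
  have VV: "\<forall>v\<in>V. \<forall>w\<in>V. v * w = 0"
    unfolding V_def using square_zero_mult[OF prod] by blast
  have "subspace V"
  proof (rule subspaceI)
    show "0 \<in> V" by (simp add: V_def)
  next
    fix v w assume "v \<in> V" "w \<in> V"
    moreover have "v * w = 0" "w * v = 0" using VV calculation by blast+
    ultimately show "v + w \<in> V" by (simp add: V_def algebra_simps)
  next
    fix c v assume "v \<in> V"
    thus "c *s v \<in> V" by (simp add: V_def)
  qed
  moreover have "span {1} \<inter> V \<subseteq> {0}"
    by (auto simp: span_singleton V_def)
  moreover have "\<exists>u\<in>span {1}. \<exists>v\<in>V. x = u + v" for x
  proof -
    obtain \<mu> \<gamma> where split: "(x - \<mu> *s 1) * (x - \<gamma> *s 1) = 0"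
      using quadratic_splits[OF prod dim] by blast
    show ?thesis
    proof (cases "\<mu> = \<gamma>")
      case True
      with split have "x - \<mu> *s 1 \<in> V" by (simp add: V_def)
      thus ?thesis by (intro bexI[of _ "\<mu> *s 1"] bexI[of _ "x - \<mu> *s 1"]) simp_all
    next
      case False
      define d where "d = \<gamma> - \<mu>"
      have d: "d \<noteq> 0" using False by (simp add: d_def)
      have "(x - \<mu> *s 1) * (x - \<mu> *s 1) = (x - \<mu> *s 1) * (x - \<gamma> *s 1) + d *s (x - \<mu> *s 1)"
        by (simp add: d_def algebra_simps)
      hence "(x - \<mu> *s 1) * (x - \<mu> *s 1) = d *s (x - \<mu> *s 1)" by (simp add: split)
      hence "((1 / d) *s (x - \<mu> *s 1)) * ((1 / d) *s (x - \<mu> *s 1)) = (1 / d) *s (x - \<mu> *s 1)"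
        using d by simp
      hence "(1 / d) *s (x - \<mu> *s 1) \<in> span {1}" by (rule scalar)
      hence "x - \<mu> *s 1 \<in> span {1}" using d span_unscale by auto
      hence "x \<in> span {1}" using span_add_eq2[of "\<mu> *s 1" "{1}" "x - \<mu> *s 1"] by simp
      thus ?thesis by (intro bexI[of _ x] bexI[of _ 0]) (simp_all add: V_def)
    qed
  qed
  ultimately show ?thesis
    unfolding square_zero_form_def line_eq_span using VV direct_sum2I by blast
qed

section \<open>Idempotents\<close>

lemma subspace_vimage_mult_left: "subspace S \<Longrightarrow> subspace {y. a * y \<in> S}"
  by (auto simp: subspace_def distrib_left)

lemma subspace_vimage_mult_right: "subspace S \<Longrightarrow> subspace {y. y * a \<in> S}"
  by (auto simp: subspace_def distrib_right)

lemma idempotent_left_mult_dichotomy: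
  assumes prod: "products_in_span" and ee: "e * e = e"
  shows "e * y \<in> span {e} \<or> (1 - e) * y \<in> span {1 - e}"
proof -
  obtain a b c where ey: "e * y = a *s 1 + b *s e + c *s y"
    using products_in_spanD[OF prod] by blast
  show ?thesis
  proof (cases "c = 1")
    case True
    with ey have fy: "(1 - e) * y = (- a) *s 1 + (- b) *s e"
      by (simp add: algebra_simps)
    have "(1 - e) * y = (1 - e) * ((1 - e) * y)"
      by (simp add: algebra_simps ee mult.assoc[symmetric])
    also have "\<dots> = (- a) *s (1 - e)"
      unfolding fy by (simp add: algebra_simps ee)
    finally have "(1 - e) * y \<in> span {1 - e}" by (simp only: scale_in_span_singleton)
    thus ?thesis ..
  next
    case False
    have "e * y = e * (e * y)" by (simp add: mult.assoc[symmetric] ee)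
    also have "\<dots> = (a + b) *s e + c *s (e * y)"
      by (simp add: ey algebra_simps ee)
    finally have "(1 - c) *s (e * y) = (a + b) *s e"
      by (simp add: algebra_simps)
    hence "(1 - c) *s (e * y) \<in> span {e}" by simp
    thus ?thesis using False span_unscale by auto
  qed
qed

lemma idempotent_right_mult_dichotomy:
  assumes prod: "products_in_span" and ee: "e * e = e"
  shows "y * e \<in> span {e} \<or> y * (1 - e) \<in> span {1 - e}"
proof -
  obtain a b c where ye: "y * e = a *s 1 + b *s y + c *s e"
    using products_in_spanD[OF prod] by blast
  show ?thesis
  proof (cases "b = 1")
    case True
    with ye have yf: "y * (1 - e) = (- a) *s 1 + (- c) *s e"
      by (simp add: algebra_simps)
    have "y * (1 - e) = (y * (1 - e)) * (1 - e)"
      by (simp add: algebra_simps ee mult.assoc)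
    also have "\<dots> = (- a) *s (1 - e)"
      unfolding yf by (simp add: algebra_simps ee)
    finally have "y * (1 - e) \<in> span {1 - e}" by (simp only: scale_in_span_singleton)
    thus ?thesis ..
  next
    case False
    have "y * e = (y * e) * e" by (simp add: mult.assoc ee)
    also have "\<dots> = (a + c) *s e + b *s (y * e)"
      by (simp add: ye algebra_simps ee)
    finally have "(1 - b) *s (y * e) = (a + c) *s e"
      by (simp add: algebra_simps)
    hence "(1 - b) *s (y * e) \<in> span {e}" by simp
    thus ?thesis using False span_unscale by auto
  qed
qed

text \<open>The pointwise dichotomies become uniform because a vector space is not the union of
  two proper subspaces.\<close>

lemma idempotent_left_mult_cases:
  assumes prod: "products_in_span" and ee: "e * e = e"
  shows "(\<forall>y. e * y \<in> span {e}) \<or> (\<forall>y. (1 - e) * y \<in> span {1 - e})"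
proof -
  have "{y. e * y \<in> span {e}} = UNIV \<or> {y. (1 - e) * y \<in> span {1 - e}} = UNIV"
    by (rule subspace_Un_eq_UNIV)
      (use idempotent_left_mult_dichotomy[OF prod ee] in \<open>auto intro: subspace_vimage_mult_left\<close>)
  thus ?thesis by auto
qed

lemma idempotent_right_mult_cases:
  assumes prod: "products_in_span" and ee: "e * e = e"
  shows "(\<forall>y. y * e \<in> span {e}) \<or> (\<forall>y. y * (1 - e) \<in> span {1 - e})"
proof -
  have "{y. y * e \<in> span {e}} = UNIV \<or> {y. y * (1 - e) \<in> span {1 - e}} = UNIV"
    by (rule subspace_Un_eq_UNIV)
      (use idempotent_right_mult_dichotomy[OF prod ee] in \<open>auto intro: subspace_vimage_mult_right\<close>)
  thus ?thesis by auto
qed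

lemma corner_product_formula:
  assumes prod: "products_in_span" and gg: "g * g = g" and g1: "g \<noteq> 1"
    and b: "g * b * g = b" and c: "g * c * g = c"
    and b_indep: "b \<notin> span {g}" and c_indep: "c \<notin> span {g, b}"
  shows "\<exists>\<alpha>. b * c = \<alpha> *s (g - b - c)"
proof -
  define f where "f = 1 - g"
  have f0: "f \<noteq> 0" using g1 by (simp add: f_def)
  have g0: "g \<noteq> 0" using b b_indep by auto
  have ff: "f * f = f" by (simp add: f_def algebra_simps gg)
  have corner: "u * f = 0" "f * u = 0" if "g * u * g = u" for u
  proof -
    have "u * f = g * u * (g * f)" and "f * u = (f * g) * u * g"
      by (metis that mult.assoc)+
    thus "u * f = 0" "f * u = 0" by (simp_all add: f_def algebra_simps gg)
  qed
  have bf: "b * f = 0" and fc: "f * c = 0" and cf: "c * f = 0"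
    using corner b c by auto
  have one: "\<alpha> *s 1 = \<alpha> *s g + \<alpha> *s f" for \<alpha>
    by (simp add: f_def algebra_simps)
  txt \<open>Expand \<open>b c\<close> both as \<open>(b + f) c\<close> and as \<open>b (c + f)\<close>; right multiplication by
    \<open>f\<close> kills \<open>b c\<close> and pins down one coefficient in each expansion.\<close>
  obtain \<alpha> \<beta> \<gamma> where "(b + f) * c = \<alpha> *s 1 + \<beta> *s (b + f) + \<gamma> *s c"
    using products_in_spanD[OF prod] by blast
  hence bc1: "b * c = \<alpha> *s 1 + \<beta> *s (b + f) + \<gamma> *s c"
    by (simp add: distrib_right fc)
  have "(\<alpha> + \<beta>) *s f = (b * c) * f"
    unfolding bc1 by (simp add: algebra_simps bf ff cf)
  also have "\<dots> = 0" by (simp add: mult.assoc cf)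
  finally have \<beta>: "\<beta> = - \<alpha>" using f0 by (simp add: eq_neg_iff_add_eq_0 add.commute)
  obtain \<alpha>' \<beta>' \<gamma>' where "b * (c + f) = \<alpha>' *s 1 + \<beta>' *s b + \<gamma>' *s (c + f)"
    using products_in_spanD[OF prod] by blast
  hence bc2: "b * c = \<alpha>' *s 1 + \<beta>' *s b + \<gamma>' *s (c + f)"
    by (simp add: distrib_left bf)
  have "(\<alpha>' + \<gamma>') *s f = (b * c) * f"
    unfolding bc2 by (simp add: algebra_simps bf ff cf)
  also have "\<dots> = 0" by (simp add: mult.assoc cf)
  finally have \<gamma>': "\<gamma>' = - \<alpha>'" using f0 by (simp add: eq_neg_iff_add_eq_0 add.commute)
  have "\<alpha> *s g + (- \<alpha>) *s b + \<gamma> *s c = b * c"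
    unfolding bc1 \<beta> one by (simp add: algebra_simps)
  also have "\<dots> = \<alpha>' *s g + \<beta>' *s b + (- \<alpha>') *s c"
    unfolding bc2 \<gamma>' one by (simp add: algebra_simps)
  finally have "\<alpha> = \<alpha>' \<and> \<gamma> = - \<alpha>'"
    using lin_comb3_unique[OF g0 b_indep c_indep] by blast
  hence "b * c = \<alpha> *s g + (- \<alpha>) *s b + (- \<alpha>) *s c"
    unfolding bc1 \<beta> one by (simp add: algebra_simps)
  thus ?thesis by (auto simp: algebra_simps)
qed

lemma proper_corner_in_span:
  assumes prod: "products_in_span" and gg: "g * g = g" and g1: "g \<noteq> 1"
    and b: "g * b * g = b" and c: "g * c * g = c" and b_indep: "b \<notin> span {g}"
  shows "c \<in> span {g, b}"
proof (rule ccontr)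
  assume c_indep: "c \<notin> span {g, b}"
  have g0: "g \<noteq> 0" using b b_indep by auto
  have gc: "g * c = c" by (metis c gg mult.assoc)
  obtain \<alpha> where \<alpha>: "b * c = \<alpha> *s (g - b - c)"
    using corner_product_formula[OF prod gg g1 b c b_indep c_indep] by blast
  have b': "g * (b + g) * g = b + g"
    by (simp add: distrib_left distrib_right b gg)
  have b'_indep: "b + g \<notin> span {g}"
    using b_indep span_add_eq2[of g "{g}" b] by (simp add: span_base)
  have "span {g, b + g} \<subseteq> span {g, b}"
    by (rule span_minimal) (auto intro: span_base span_add)
  hence c'_indep: "c \<notin> span {g, b + g}" using c_indep by blast
  obtain \<alpha>' where \<alpha>': "(b + g) * c = \<alpha>' *s (g - (b + g) - c)"
    using corner_product_formula[OF prod gg g1 b' c b'_indep c'_indep] by blast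
  have "\<alpha> *s g + (- \<alpha>) *s b + (1 - \<alpha>) *s c = (b + g) * c"
    by (simp add: distrib_right gc \<alpha> algebra_simps)
  also have "\<dots> = 0 *s g + (- \<alpha>') *s b + (- \<alpha>') *s c"
    unfolding \<alpha>' by (simp add: algebra_simps)
  finally have "\<alpha> = 0 \<and> - \<alpha> = - \<alpha>' \<and> 1 - \<alpha> = - \<alpha>'"
    by (rule lin_comb3_unique[OF g0 b_indep c_indep])
  thus False by auto
qed

lemma idempotent_not_two_sided_scalar:
  assumes prod: "products_in_span" and dim: "dim_ge scale 4"
    and ee: "e * e = e" and e0: "e \<noteq> 0"
    and left: "\<forall>y. e * y \<in> span {e}" and right: "\<forall>y. y * e \<in> span {e}"
  shows False
proof -
  define f where "f = 1 - e"
  have ff: "f * f = f" and f1: "f \<noteq> 1" and ef: "e * f = 0" and fe: "f * e = 0"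
    using e0 by (simp_all add: f_def algebra_simps ee)
  have ffyff: "f * (f * y * f) * f = f * y * f" for y
    by (simp add: mult.assoc[symmetric] ff) (simp add: mult.assoc ff)
  txt \<open>Every element is a multiple of \<open>e\<close> plus an element of the corner \<open>f A f\<close>.\<close>
  have reduce: "y \<in> span (insert e S)" if "f * y * f \<in> span S" for y S
  proof -
    obtain r where r: "e * y = r *s e" using left by (auto simp: span_singleton)
    obtain s where s: "y * e = s *s e" using right by (auto simp: span_singleton)
    have "y = (e + f) * y * (e + f)" by (simp add: f_def)
    also have "\<dots> = (e * y) * e + (e * y) * f + f * (y * e) + f * y * f"
      by (simp add: algebra_simps)
    also have "\<dots> = r *s e + f * y * f"
      by (simp add: r s ee ef fe)
    finally have "y - r *s e = f * y * f" by (metis add_diff_cancel_left')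
    thus ?thesis using that span_breakdown_eq by metis
  qed
  obtain z1 where z1: "z1 \<notin> span {e, f, f}" using exists_not_in_span_triple[OF dim] .
  define b where "b = f * z1 * f"
  have b_indep: "b \<notin> span {f}"
    using z1 reduce[of z1 "{f}"] by (auto simp: b_def)
  obtain z2 where z2: "z2 \<notin> span {e, f, b}" using exists_not_in_span_triple[OF dim] .
  have "f * z2 * f \<in> span {f, b}"
    by (rule proper_corner_in_span[OF prod ff f1 _ ffyff b_indep]) (simp add: b_def ffyff)
  with z2 reduce show False by blast
qed

lemma triangular_form_if_one_sided_scalar:
  assumes ee: "e * e = e"
    and left: "\<forall>y. e * y \<in> span {e}" and right: "\<forall>y. y * (1 - e) \<in> span {1 - e}"
  shows "triangular_form"
proof -
  define f where "f = 1 - e"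
  have ff: "f * f = f" and ef: "e * f = 0" and fe: "f * e = 0" and ef1: "e + f = 1"
    by (simp_all add: f_def algebra_simps ee)
  have eye: "e * y * e \<in> span {e}" and eyf: "e * y * f = 0" for y
  proof -
    obtain r where "e * y = r *s e" using left by (auto simp: span_singleton)
    thus "e * y * e \<in> span {e}" "e * y * f = 0" by (simp_all add: ee ef)
  qed
  have fyf: "f * y * f \<in> span {f}" for y
  proof -
    obtain s where "y * f = s *s f" using right by (auto simp: span_singleton f_def)
    thus ?thesis by (simp add: mult.assoc ff)
  qed
  define V where "V = {v. e * v = 0 \<and> v * f = 0}"
  have "subspace V"
    by (auto simp: subspace_def V_def distrib_left distrib_right)
  have VV: "\<forall>v\<in>V. \<forall>w\<in>V. v * w = 0"
  proof (intro ballI)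
    fix v w assume "v \<in> V" "w \<in> V"
    have "v * w = v * (e + f) * w" by (simp add: ef1)
    also have "\<dots> = v * (e * w) + (v * f) * w"
      by (simp add: distrib_left distrib_right mult.assoc)
    also have "\<dots> = 0" using \<open>v \<in> V\<close> \<open>w \<in> V\<close> by (simp add: V_def)
    finally show "v * w = 0" .
  qed
  have eV: "\<forall>v\<in>V. e * v = 0" and Vf: "\<forall>v\<in>V. v * f = 0"
    by (simp_all add: V_def)
  have fye: "f * y * e \<in> V" for y
    by (simp add: V_def mult.assoc[symmetric] ef) (simp add: mult.assoc ef)
  have "direct_sum3 (span {e}) (span {f}) V"
  proof (rule direct_sum3I)
    fix u w v assume "u \<in> span {e}" "w \<in> span {f}" "v \<in> V" "u + w + v = 0"
    then obtain p q where u: "u = p *s e" and w: "w = q *s f" and ev: "e * v = 0" and vf: "v * f = 0"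
      by (auto simp: span_singleton V_def)
    have "u = e * (u + w + v) * e"
      by (simp add: u w distrib_left distrib_right ee ef ev)
    moreover have "w = f * (u + w + v) * f"
      by (simp add: u w distrib_left distrib_right ff fe mult.assoc vf)
    ultimately show "u = 0 \<and> w = 0" using \<open>u + w + v = 0\<close> by simp
  next
    fix y
    have "y = (e + f) * y * (e + f)" by (simp add: ef1)
    also have "\<dots> = e * y * e + f * y * f + f * y * e"
      by (simp add: algebra_simps eyf[unfolded mult.assoc])
    finally show "\<exists>u\<in>span {e}. \<exists>w\<in>span {f}. \<exists>v\<in>V. y = u + w + v"
      using eye fyf fye by blast
  qed (use \<open>subspace V\<close> in simp_all)
  thus ?thesis
    unfolding triangular_form_def line_eq_span
    using \<open>subspace V\<close> VV eV Vf ee ff ef fe ef1 by blast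
qed

lemma triangular_form_if_nonscalar_idempotent:
  assumes prod: "products_in_span" and dim: "dim_ge scale 4"
    and ee: "e * e = e" and nonscalar: "e \<notin> span {1}"
  shows "triangular_form"
proof -
  have e0: "e \<noteq> 0" and f0: "1 - e \<noteq> 0"
    using nonscalar span_zero span_base[of 1 "{1}"] by auto
  have ff: "(1 - e) * (1 - e) = 1 - e" by (simp add: algebra_simps ee)
  have "\<not> ((\<forall>y. e * y \<in> span {e}) \<and> (\<forall>y. y * e \<in> span {e}))"
    using idempotent_not_two_sided_scalar[OF prod dim ee e0] by blast
  moreover have "\<not> ((\<forall>y. (1 - e) * y \<in> span {1 - e}) \<and> (\<forall>y. y * (1 - e) \<in> span {1 - e}))"
    using idempotent_not_two_sided_scalar[OF prod dim ff f0] by blast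
  moreover have "(\<forall>y. (1 - e) * y \<in> span {1 - e}) \<Longrightarrow> (\<forall>y. y * e \<in> span {e}) \<Longrightarrow> triangular_form"
    using triangular_form_if_one_sided_scalar[OF ff] by simp
  ultimately show ?thesis
    using idempotent_left_mult_cases[OF prod ee] idempotent_right_mult_cases[OF prod ee]
      triangular_form_if_one_sided_scalar[OF ee] by blast
qed

lemma square_zero_form_or_triangular_form:
  assumes prod: "products_in_span" and dim: "dim_ge scale 4"
  shows "square_zero_form \<or> triangular_form"
proof (cases "\<exists>e. e * e = e \<and> e \<notin> span {1}")
  case True
  then obtain e where "e * e = e" "e \<notin> span {1}" by blast
  with triangular_form_if_nonscalar_idempotent[OF prod dim] show ?thesis by blast
next
  case False
  hence "\<And>e. e * e = e \<Longrightarrow> e \<in> span {1}" by blast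
  with square_zero_form_if_idempotents_scalar[OF prod dim] show ?thesis by blast
qed

end

theorem theorem5p7:
  fixes scale :: "'a::field \<Rightarrow> 'b::ring_1 \<Rightarrow> 'b"
  assumes alg: "k_algebra scale"
    and dim4: "dim_ge scale 4"
  defines "P1 \<equiv> (\<exists>x y :: 'b. vector_space.dim scale {1, x, y, x * y} \<ge> 4)"
    and "P2 \<equiv> (\<exists>V :: 'b set. module.subspace scale V
                 \<and> direct_sum2 (line scale 1) V
                 \<and> (\<forall>v\<in>V. \<forall>w\<in>V. v * w = 0))"
    and "P3 \<equiv> (\<exists>(V :: 'b set) e f. module.subspace scale V
                 \<and> direct_sum3 (line scale e) (line scale f) V
                 \<and> (\<forall>v\<in>V. \<forall>w\<in>V. v * w = 0)
                 \<and> (\<forall>v\<in>V. e * v = 0) \<and> (\<forall>v\<in>V. v * f = 0)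
                 \<and> e * e = e \<and> f * f = f \<and> e * f = 0 \<and> f * e = 0 \<and> e + f = 1)"
  shows "(P1 \<and> \<not> P2 \<and> \<not> P3) \<or> (\<not> P1 \<and> P2 \<and> \<not> P3) \<or> (\<not> P1 \<and> \<not> P2 \<and> P3)"
proof -
  interpret k_algebra scale by (fact alg)
  have P1: "P1 \<longleftrightarrow> \<not> products_in_span"
    unfolding P1_def products_in_span_iff_dim_lt_4[OF dim4] by (simp add: not_less)
  have P2: "P2 \<longleftrightarrow> square_zero_form" unfolding P2_def square_zero_form_def ..
  have P3: "P3 \<longleftrightarrow> triangular_form" unfolding P3_def triangular_form_def ..
  have "\<not> (square_zero_form \<and> triangular_form)"
    using square_zero_form_idempotent triangular_form_nontrivial_idempotent[OF dim4] by blast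
  moreover have "products_in_span \<Longrightarrow> square_zero_form \<or> triangular_form"
    by (rule square_zero_form_or_triangular_form[OF _ dim4])
  ultimately show ?thesis
    unfolding P1 P2 P3
    using products_in_span_if_square_zero_form products_in_span_if_triangular_form by blast
qed

end
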